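(* Let $\varepsilon,\lambda>0$, $q\in\mathbb R$, let $P$, $p_1$, $p_{10}=-\lambda/(2\varepsilon)$ be as in the context, and let $$K(x,y)=-\frac{\lambda}{\varepsilon}x\,\frac{I_1\big(\sqrt{\lambda(x^2-y^2)/\varepsilon}\big)}{\sqrt{\lambda(x^2-y^2)/\varepsilon}},\qquad 0\le y\le x\le1 .$$ Then $K$ satisfies $K_{xx}-K_{yy}=\frac{\lambda}{\varepsilon}K$, $K_y(x,0)=0$, $K(x,x)=-\frac{\lambda}{2\varepsilon}x$, and, with the control law $$U(t)=\int_0^1\big(rK(1,y)+K_x(1,y)\big)\hat u(y,t)\,dy,\qquad r=q-\frac{\lambda}{2\varepsilon},$$ the transformation $\hat w(x,t)=\hat u(x,t)-\int_0^xK(x,y)\hat u(y,t)dy$ maps (classical) solutions of the observer system into solutions of $$\hat w_t=\varepsilon\hat w_{xx}+g(x)\tilde w(0,t),\quad \hat w_x(0,t)=-\frac{\lambda}{2\varepsilon}\tilde w(0,t),\quad \hat w_x(1,t)=-r\hat w(1,t),$$ where $g(x)=p_1(x)-\frac{\lambda}{2}K(x,0)-\int_0^xK(x,y)p_1(y)dy$ and $\tilde w$ is related to $\tilde u=u-\hat u$ by $\tilde u(x,t)=\tilde w(x,t)-\int_0^xP(x,y)\tilde w(y,t)dy$.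
   Context: $I_m$ is the modified Bessel function of the first kind of order $m$ (with $I_1(z)/z\to1/2$ as $z\to0$). The kernel $P$ is defined for $0\le y\le x\le 1$ by $$P(x,y)=\frac{q\lambda/\varepsilon}{\sqrt{\lambda/\varepsilon+q^2}}\int_0^{x-y}e^{-q\tau/2}I_0\Big(\sqrt{\lambda(2-x-y)(x-y-\tau)/\varepsilon}\Big)\sinh\Big(\tfrac{\sqrt{\lambda/\varepsilon+q^2}}{2}\tau\Big)d\tau-\frac{\lambda}{\varepsilon}(1-y)\frac{I_1\big(\sqrt{\lambda((1-y)^2-(1-x)^2)/\varepsilon}\big)}{\sqrt{\lambda((1-y)^2-(1-x)^2)/\varepsilon}},$$ and $p_1(x)=\varepsilon P_y(x,0)$, $p_{10}=P(0,0)=-\lambda/(2\varepsilon)$. Plant: $u_t=\varepsilon u_{xx}+\lambda u$, $u_x(0,t)=0$, $u_x(1,t)+qu(1,t)=U(t)$. Observer (measurement $u(0,t)$): $\hat u_t=\varepsilon\hat u_{xx}+\lambda\hat u+p_1(x)(u(0,t)-\hat u(0,t))$, $\hat u_x(0,t)=p_{10}(u(0,t)-\hat u(0,t))$, $\hat u_x(1,t)+q\hat u(1,t)=U(t)$. *)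

theory Defs
  imports "HOL-Analysis.Analysis"
begin

definition besselI :: "nat \<Rightarrow> real \<Rightarrow> real" where
  "besselI m z = (\<Sum>k. (z / 2) ^ (2 * k + m) / (fact k * fact (k + m)))"

text \<open>I_1(z)/z, continuously extended by 1/2 at z = 0.\<close>
definition besselI1_div :: "real \<Rightarrow> real" where
  "besselI1_div z = (if z = 0 then 1 / 2 else besselI 1 z / z)"

definition kerP :: "real \<Rightarrow> real \<Rightarrow> real \<Rightarrow> real \<Rightarrow> real \<Rightarrow> real" where
  "kerP eps lam q x y =
     (q * lam / eps) / sqrt (lam / eps + q^2) *
       integral {0..x - y} (\<lambda>\<tau>. exp (- q * \<tau> / 2)
          * besselI 0 (sqrt (lam * (2 - x - y) * (x - y - \<tau>) / eps))
          * sinh (sqrt (lam / eps + q^2) / 2 * \<tau>))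
     - (lam / eps) * (1 - y) * besselI1_div (sqrt (lam * ((1 - y)^2 - (1 - x)^2) / eps))"

definition obs_p1 :: "real \<Rightarrow> real \<Rightarrow> real \<Rightarrow> real \<Rightarrow> real" where
  "obs_p1 eps lam q x = eps * deriv (\<lambda>y. kerP eps lam q x y) 0"

definition kerK :: "real \<Rightarrow> real \<Rightarrow> real \<Rightarrow> real \<Rightarrow> real" where
  "kerK eps lam x y = - (lam / eps) * x * besselI1_div (sqrt (lam * (x^2 - y^2) / eps))"

definition gfun :: "real \<Rightarrow> real \<Rightarrow> real \<Rightarrow> real \<Rightarrow> real" where
  "gfun eps lam q x = obs_p1 eps lam q x - lam / 2 * kerK eps lam x 0
      - integral {0..x} (\<lambda>y. kerK eps lam x y * obs_p1 eps lam q y)"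

definition classical_sol ::
  "(real \<Rightarrow> real \<Rightarrow> real) \<Rightarrow> (real \<Rightarrow> real \<Rightarrow> real) \<Rightarrow> (real \<Rightarrow> real \<Rightarrow> real)
     \<Rightarrow> (real \<Rightarrow> real \<Rightarrow> real) \<Rightarrow> bool" where
  "classical_sol v vx vxx vt \<longleftrightarrow>
     (\<forall>x\<in>{0..1}. \<forall>t>0.
        ((\<lambda>s. v s t) has_real_derivative vx x t) (at x within {0..1}) \<and>
        ((\<lambda>s. vx s t) has_real_derivative vxx x t) (at x within {0..1}) \<and>
        ((\<lambda>s. v x s) has_real_derivative vt x t) (at t)) \<and>
     continuous_on ({0..1} \<times> {0<..}) (\<lambda>(x, t). v x t) \<and>
     continuous_on ({0..1} \<times> {0<..}) (\<lambda>(x, t). vx x t) \<and>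
     continuous_on ({0..1} \<times> {0<..}) (\<lambda>(x, t). vxx x t) \<and>
     continuous_on ({0..1} \<times> {0<..}) (\<lambda>(x, t). vt x t)"

end

theory Submission
  imports Defs
begin

(*
  The series I_1(sqrt z) / sqrt z = sum_k z^k / (2 * 4^k * k! * (k+1)!) is entire and solves
  4 z F'' + 8 F' = F.  Hence K(x,y) = -(lam/eps) x F(lam (x^2 - y^2) / eps) is smooth on the
  whole plane, and the kernel equations are read off from this closed form: the ODE gives
  K_xx - K_yy = (lam/eps) K, and F(0) = 1/2 gives the diagonal value.

  For the transformation, differentiate w^ = u^ - int_0^x K(x,y) u^(y) dy under the integral
  sign.  Integrating K u^_yy by parts twice turns the observer equation into eps w^_xx plus
  boundary terms; the diagonal value of K and K_y(x,0) = 0 reduce these to the output injection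
  g(x) (u - u^)(0), and at x = 1 the control law is exactly what gives w^_x(1) = -r w^(1).
  Finally (u - u^)(0) = w~(0) since the error transformation is a Volterra integral from 0.
*)

section \<open>Integrals depending on a parameter\<close>

lemma continuous_on_section:
  assumes "continuous_on (A \<times> B) (\<lambda>(x, t). v x t)" "t \<in> B"
  shows "continuous_on A (\<lambda>x. v x t)"
  by (rule continuous_on_compose2[OF assms(1), where f="\<lambda>x. (x, t)", simplified])
    (use assms(2) in \<open>auto intro!: continuous_intros\<close>)

lemma integrable_on_kernel_product:
  fixes k :: "real \<Rightarrow> real \<Rightarrow> real"
  assumes "continuous_on {a..b} v" "continuous_on UNIV (\<lambda>(x, y). k x y)" "x \<in> {a..b}"
  shows "(\<lambda>y. k x y * v y) integrable_on {a..x}"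
proof -
  have "continuous_on {a..x} v"
    using assms by (auto elim: continuous_on_subset)
  moreover have "continuous_on {a..x} (\<lambda>y. (\<lambda>(x, y). k x y) (x, y))"
    by (rule continuous_on_compose2[OF assms(2)]) (auto intro!: continuous_intros)
  ultimately show ?thesis
    by (auto intro!: integrable_continuous_real continuous_intros)
qed

text \<open>Both partial derivatives of \<open>(s, r) \<mapsto> \<integral>\<^sub>a\<^sup>r G s y dy\<close> are continuous, so its
  derivative along the diagonal \<open>s = r\<close> is their sum.\<close>

lemma has_real_derivative_integral_variable_limit:
  fixes G Gx :: "real \<Rightarrow> real \<Rightarrow> real"
  assumes deriv: "\<And>s y. s \<in> {a..b} \<Longrightarrow> y \<in> {a..b} \<Longrightarrow>
      ((\<lambda>s. G s y) has_real_derivative Gx s y) (at s within {a..b})"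
    and cont: "continuous_on ({a..b} \<times> {a..b}) (\<lambda>(s, y). G s y)"
    and cont_x: "continuous_on ({a..b} \<times> {a..b}) (\<lambda>(s, y). Gx s y)"
    and x: "x \<in> {a..b}"
  shows "((\<lambda>s. integral {a..s} (G s)) has_real_derivative G x x + integral {a..x} (Gx x))
           (at x within {a..b})"
proof -
  define \<Phi> where "\<Phi> s r = integral {a..r} (G s)" for s r
  have cont_G: "continuous_on {a..b} (G s)" if "s \<in> {a..b}" for s
    by (rule continuous_on_compose2[OF cont, where f="\<lambda>y. (s, y)", simplified])
      (use that in \<open>auto intro!: continuous_intros\<close>)
  have sub: "{a..x} \<subseteq> {a..b}"
    using x by auto
  have "((\<lambda>s. integral (cbox a x) (G s)) has_real_derivative integral (cbox a x) (Gx x))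
      (at x within {a..b})"
  proof (rule leibniz_rule_field_derivative)
    show "G s integrable_on cbox a x" if "s \<in> {a..b}" for s
      using integrable_continuous_real[OF continuous_on_subset[OF cont_G[OF that] sub]] by simp
    show "continuous_on ({a..b} \<times> cbox a x) (\<lambda>(s, y). Gx s y)"
      by (rule continuous_on_subset[OF cont_x]) (use sub in auto)
  qed (use deriv sub x in auto)
  then have "((\<lambda>s. \<Phi> s x) has_derivative (\<lambda>h. h * integral {a..x} (Gx x))) (at x within {a..b})"
    unfolding \<Phi>_def has_field_derivative_def cbox_interval
    by (rule has_derivative_eq_rhs) (auto simp: fun_eq_iff mult.commute)
  then have "((\<lambda>(s, r). \<Phi> s r) has_derivative
      (\<lambda>(h, k). h * integral {a..x} (Gx x) + blinfun_mult_right (G x x) k))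
      (at (x, x) within {a..b} \<times> {a..b})"
  proof (rule has_derivative_partialsI[where fy="\<lambda>s r. blinfun_mult_right (G s r)"])
    show "((\<lambda>r. \<Phi> s r) has_derivative blinfun_apply (blinfun_mult_right (G s r))) (at r within {a..b})"
      if "s \<in> {a..b}" "r \<in> {a..b}" for s r
      using integral_has_real_derivative[OF cont_G[OF that(1)] that(2)]
      unfolding \<Phi>_def by (simp add: has_field_derivative_def mult.commute)
    have "continuous_on ({a..b} \<times> {a..b}) (\<lambda>(s, r). blinfun_mult_right (G s r))"
      using cont by (auto simp: split_beta intro!: continuous_intros)
    then show "continuous (at (x, x) within {a..b} \<times> {a..b}) (\<lambda>(s, r). blinfun_mult_right (G s r))"
      using x by (simp add: continuous_on_eq_continuous_within)
  qed (use x in auto)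
  then have "((\<lambda>(s, r). \<Phi> s r) has_derivative
      (\<lambda>(h, k). h * integral {a..x} (Gx x) + blinfun_mult_right (G x x) k))
      (at ((\<lambda>s. (s, s)) x) within (\<lambda>s. (s, s)) ` {a..b})"
    by (rule has_derivative_subset) auto
  moreover have "((\<lambda>s. (s, s)) has_derivative (\<lambda>h. (h, h))) (at x within {a..b})"
    by (auto intro!: derivative_eq_intros)
  ultimately have "((\<lambda>s. \<Phi> s s) has_derivative (\<lambda>h. h * integral {a..x} (Gx x) + G x x * h))
      (at x within {a..b})"
    using diff_chain_within by (fastforce simp: o_def)
  then show ?thesis
    unfolding \<Phi>_def has_field_derivative_def
    by (rule has_derivative_eq_rhs) (auto simp: algebra_simps fun_eq_iff)
qed

lemma has_real_derivative_volterra_integral: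
  fixes k kx :: "real \<Rightarrow> real \<Rightarrow> real"
  assumes "\<And>s y. ((\<lambda>s. k s y) has_real_derivative kx s y) (at s)"
    and "continuous_on UNIV (\<lambda>(s, y). k s y)" "continuous_on UNIV (\<lambda>(s, y). kx s y)"
    and "continuous_on {a..b} v" "x \<in> {a..b}"
  shows "((\<lambda>s. integral {a..s} (\<lambda>y. k s y * v y)) has_real_derivative
           k x x * v x + integral {a..x} (\<lambda>y. kx x y * v y)) (at x within {a..b})"
proof (rule has_real_derivative_integral_variable_limit[OF _ _ _ assms(5)])
  have v: "continuous_on ({a..b} \<times> {a..b}) (\<lambda>p. v (snd p))"
    by (rule continuous_on_compose2[OF assms(4)]) (auto intro: continuous_intros)
  show "continuous_on ({a..b} \<times> {a..b}) (\<lambda>(s, y). k s y * v y)"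
    using continuous_on_mult[OF continuous_on_subset[OF assms(2) subset_UNIV] v] by (simp add: split_beta)
  show "continuous_on ({a..b} \<times> {a..b}) (\<lambda>(s, y). kx s y * v y)"
    using continuous_on_mult[OF continuous_on_subset[OF assms(3) subset_UNIV] v] by (simp add: split_beta)
  show "((\<lambda>s. k s y * v y) has_real_derivative kx s y * v y) (at s within {a..b})" for s y
    by (rule DERIV_cmult_right[OF has_field_derivative_at_within[OF assms(1)]])
qed

lemma has_real_derivative_integral_param:
  fixes v vt :: "real \<Rightarrow> real \<Rightarrow> real"
  assumes deriv: "\<And>y s. y \<in> {a..b} \<Longrightarrow> s \<in> T \<Longrightarrow> ((\<lambda>s. v y s) has_real_derivative vt y s) (at s)"
    and cont: "continuous_on ({a..b} \<times> T) (\<lambda>(y, s). v y s)"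
    and cont_t: "continuous_on ({a..b} \<times> T) (\<lambda>(y, s). vt y s)"
    and g: "continuous_on {a..b} g"
    and T: "open T" "convex T" "t \<in> T"
  shows "((\<lambda>s. integral {a..b} (\<lambda>y. g y * v y s)) has_real_derivative
           integral {a..b} (\<lambda>y. g y * vt y t)) (at t)"
proof -
  have "((\<lambda>s. integral (cbox a b) (\<lambda>y. g y * v y s)) has_real_derivative
      integral (cbox a b) (\<lambda>y. g y * vt y t)) (at t within T)"
  proof (rule leibniz_rule_field_derivative[where f="\<lambda>s y. g y * v y s" and fx="\<lambda>s y. g y * vt y s"])
    show "((\<lambda>s. g y * v y s) has_real_derivative g y * vt y s) (at s within T)"
      if "s \<in> T" "y \<in> cbox a b" for s y
      by (rule DERIV_cmult, rule has_field_derivative_at_within, rule deriv) (use that in auto)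
    show "(\<lambda>y. g y * v y s) integrable_on cbox a b" if "s \<in> T" for s
      using integrable_continuous_real[OF continuous_on_mult[OF g continuous_on_section[OF cont that]]]
      by simp
    have "continuous_on (T \<times> cbox a b) (\<lambda>p. (\<lambda>(y, s). vt y s) (snd p, fst p))"
      by (rule continuous_on_compose2[OF cont_t]) (auto intro!: continuous_intros)
    moreover have "continuous_on (T \<times> cbox a b) (\<lambda>p. g (snd p))"
      by (rule continuous_on_compose2[OF g]) (auto intro!: continuous_intros)
    ultimately show "continuous_on (T \<times> cbox a b) (\<lambda>(s, y). g y * vt y s)"
      by (simp add: split_beta continuous_on_mult)
  qed (use T in auto)
  then show ?thesis
    using at_within_open[OF T(3,1)] by simp
qed

lemma integral_rescale_unit_interval:
  fixes f :: "real \<Rightarrow> real"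
  assumes "continuous_on {0..x} f" "x \<ge> 0"
  shows "integral {0..x} f = x * integral {0..1} (\<lambda>s. f (x * s))"
proof (cases "x = 0")
  case False
  then have "x > 0"
    using assms by simp
  have "(f has_integral integral {0..x} f) (cbox 0 x)"
    using integrable_continuous_real[OF assms(1)] by (simp add: integrable_integral)
  from has_integral_affinity'[OF this \<open>x > 0\<close>, of 0]
  have "((\<lambda>s. f (x * s)) has_integral integral {0..x} f / x) {0..1}"
    using \<open>x > 0\<close> by (simp add: divide_inverse mult.commute)
  then show ?thesis
    using \<open>x > 0\<close> by (simp add: integral_unique)
qed simp

text \<open>Rescaling to the fixed interval \<open>[0, 1]\<close> removes the variable limit.\<close>

lemma continuous_on_integral_variable_limit:
  fixes h :: "real \<Rightarrow> real \<Rightarrow> 'a::topological_space \<Rightarrow> real"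
  assumes cont: "continuous_on ({0..b} \<times> {0..b} \<times> T) (\<lambda>(x, y, t). h x y t)"
  shows "continuous_on ({0..b} \<times> T) (\<lambda>(x, t). integral {0..x} (\<lambda>y. h x y t))"
proof -
  have rescale: "integral {0..x} (\<lambda>y. h x y t) = x * integral (cbox 0 1) (\<lambda>s. h x (x * s) t)"
    if "(x, t) \<in> {0..b} \<times> T" for x t
  proof -
    have "continuous_on {0..x} (\<lambda>y. h x y t)"
      by (rule continuous_on_compose2[OF cont, where f="\<lambda>y. (x, y, t)", simplified])
        (use that in \<open>auto intro!: continuous_intros\<close>)
    then show ?thesis
      using integral_rescale_unit_interval[of x "\<lambda>y. h x y t"] that by simp
  qed
  have "0 \<le> x * s \<and> x * s \<le> b" if "x \<in> {0..b}" "s \<in> {0..1}" for x s :: real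
    using that mult_left_le[of s x] by auto
  then have "(\<lambda>(p, s). (fst p, fst p * s, snd p)) ` (({0..b} \<times> T) \<times> cbox 0 1) \<subseteq> {0..b} \<times> {0..b} \<times> T"
    by force
  then have "continuous_on (({0..b} \<times> T) \<times> cbox 0 1)
      (\<lambda>z. (\<lambda>(x, y, t). h x y t) ((\<lambda>(p, s). (fst p, fst p * s, snd p)) z))"
    by (intro continuous_on_compose2[OF cont]) (auto simp: split_beta intro!: continuous_intros)
  then have "continuous_on ({0..b} \<times> T) (\<lambda>p. integral (cbox 0 1) (\<lambda>s. h (fst p) (fst p * s) (snd p)))"
    by (intro integral_continuous_on_param) (simp add: split_beta)
  then have "continuous_on ({0..b} \<times> T)
      (\<lambda>p. fst p * integral (cbox 0 1) (\<lambda>s. h (fst p) (fst p * s) (snd p)))"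
    by (intro continuous_intros)
  then show ?thesis
    by (rule continuous_on_eq) (use rescale in \<open>auto simp: split_beta\<close>)
qed

lemma continuous_on_volterra_integral:
  fixes v :: "real \<Rightarrow> 'a::topological_space \<Rightarrow> real" and k :: "real \<Rightarrow> real \<Rightarrow> real"
  assumes v: "continuous_on ({0..b} \<times> T) (\<lambda>(x, t). v x t)"
    and k: "continuous_on UNIV (\<lambda>(x, y). k x y)"
  shows "continuous_on ({0..b} \<times> T) (\<lambda>(x, t). integral {0..x} (\<lambda>y. k x y * v y t))"
proof (rule continuous_on_integral_variable_limit)
  have "continuous_on ({0..b} \<times> {0..b} \<times> T) (\<lambda>p. (\<lambda>(x, t). v x t) (fst (snd p), snd (snd p)))"
    by (rule continuous_on_compose2[OF v]) (auto intro!: continuous_intros)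
  moreover have "continuous_on ({0..b} \<times> {0..b} \<times> T) (\<lambda>p. (\<lambda>(x, y). k x y) (fst p, fst (snd p)))"
    by (rule continuous_on_compose2[OF k]) (auto intro!: continuous_intros)
  ultimately show "continuous_on ({0..b} \<times> {0..b} \<times> T) (\<lambda>(x, y, t). k x y * v y t)"
    by (simp add: split_beta continuous_on_mult)
qed

lemma continuous_on_diff_volterra_integral:
  fixes a v :: "real \<Rightarrow> real \<Rightarrow> real" and k :: "real \<Rightarrow> real \<Rightarrow> real"
  assumes "continuous_on ({0..1} \<times> {0<..}) (\<lambda>(x, t). a x t)"
    and "continuous_on ({0..1} \<times> {0<..}) (\<lambda>(x, t). v x t)"
    and "continuous_on UNIV (\<lambda>(x, y). k x y)"
  shows "continuous_on ({0..1} \<times> {0<..}) (\<lambda>(x, t). a x t - integral {0..x} (\<lambda>y. k x y * v y t))"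
  using continuous_on_diff[OF assms(1) continuous_on_volterra_integral[OF assms(2,3)]]
  by (simp add: split_beta)

lemma green_identity:
  fixes k k' k'' v v' v'' :: "real \<Rightarrow> real"
  assumes "0 \<le> x"
    and "\<And>y. y \<in> {0..x} \<Longrightarrow> (k has_real_derivative k' y) (at y within {0..x})"
    and "\<And>y. y \<in> {0..x} \<Longrightarrow> (k' has_real_derivative k'' y) (at y within {0..x})"
    and "\<And>y. y \<in> {0..x} \<Longrightarrow> (v has_real_derivative v' y) (at y within {0..x})"
    and "\<And>y. y \<in> {0..x} \<Longrightarrow> (v' has_real_derivative v'' y) (at y within {0..x})"
  shows "((\<lambda>y. k y * v'' y - k'' y * v y) has_integral
           (k x * v' x - k' x * v x) - (k 0 * v' 0 - k' 0 * v 0)) {0..x}"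
proof (rule fundamental_theorem_of_calculus[OF assms(1)])
  fix y assume y: "y \<in> {0..x}"
  have "((\<lambda>y. k y * v' y - k' y * v y) has_real_derivative k y * v'' y - k'' y * v y) (at y within {0..x})"
    using DERIV_diff[OF DERIV_mult[OF assms(2,5)[OF y]] DERIV_mult[OF assms(3,4)[OF y]]]
    by (simp add: algebra_simps)
  then show "((\<lambda>y. k y * v' y - k' y * v y) has_vector_derivative k y * v'' y - k'' y * v y)
      (at y within {0..x})"
    by (simp add: has_real_derivative_iff_has_vector_derivative)
qed

lemma has_real_derivatives_transform_open:
  assumes "open S" "x \<in> S" "\<And>s. s \<in> S \<Longrightarrow> f s = g s"
    and "\<And>s. (g has_real_derivative g' s) (at s)" "\<And>s. (g' has_real_derivative g'' s) (at s)"
  shows "(f has_real_derivative g' x) (at x)" and "(deriv f has_real_derivative g'' x) (at x)"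
proof -
  show "(f has_real_derivative g' x) (at x)"
    by (rule has_field_derivative_transform_within_open[OF assms(4,1,2)]) (simp add: assms(3))
  have deriv_eq: "deriv f s = g' s" if "s \<in> S" for s
    by (rule DERIV_imp_deriv, rule has_field_derivative_transform_within_open[OF assms(4,1) that])
      (simp add: assms(3))
  show "(deriv f has_real_derivative g'' x) (at x)"
    by (rule has_field_derivative_transform_within_open[OF assms(5,1,2)]) (simp add: deriv_eq)
qed


section \<open>The power series of \<open>I\<^sub>1(\<surd>z) / \<surd>z\<close>\<close>

definition bessel_ratio_coeff :: "nat \<Rightarrow> real" where
  "bessel_ratio_coeff k = 1 / (2 * 4 ^ k * fact k * fact (k + 1))"

definition bessel_ratio :: "real \<Rightarrow> real" where
  "bessel_ratio z = (\<Sum>k. bessel_ratio_coeff k * z ^ k)"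

definition bessel_ratio' :: "real \<Rightarrow> real" where
  "bessel_ratio' z = (\<Sum>k. diffs bessel_ratio_coeff k * z ^ k)"

definition bessel_ratio'' :: "real \<Rightarrow> real" where
  "bessel_ratio'' z = (\<Sum>k. diffs (diffs bessel_ratio_coeff) k * z ^ k)"

lemma bessel_ratio_coeff_nonneg: "0 \<le> bessel_ratio_coeff k"
  by (simp add: bessel_ratio_coeff_def)

lemma bessel_ratio_coeff_le_inverse_fact: "bessel_ratio_coeff k \<le> inverse (fact k)"
proof -
  have "1 * 1 \<le> (4::real) ^ k * fact (k + 1)"
    using fact_ge_1[of "k + 1", where 'a=real] by (intro mult_mono) auto
  then have "inverse (fact k) / (2 * 4 ^ k * fact (k + 1)) \<le> inverse (fact k) / (1::real)"
    by (intro divide_left_mono) auto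
  then show ?thesis
    by (simp add: bessel_ratio_coeff_def field_simps)
qed

lemma summable_bessel_ratio_coeff: "summable (\<lambda>k. bessel_ratio_coeff k * z ^ k)"
proof (rule summable_comparison_test')
  show "summable (\<lambda>k. inverse (fact k) * \<bar>z\<bar> ^ k)"
    by (rule summable_exp)
  show "norm (bessel_ratio_coeff k * z ^ k) \<le> inverse (fact k) * \<bar>z\<bar> ^ k" for k
    using bessel_ratio_coeff_le_inverse_fact[of k] bessel_ratio_coeff_nonneg[of k]
    by (simp add: abs_mult power_abs mult_right_mono)
qed

lemma summable_bessel_ratio'_coeff: "summable (\<lambda>k. diffs bessel_ratio_coeff k * z ^ k)"
  by (rule termdiff_converges_all) (rule summable_bessel_ratio_coeff)

lemma summable_bessel_ratio''_coeff: "summable (\<lambda>k. diffs (diffs bessel_ratio_coeff) k * z ^ k)"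
  by (rule termdiff_converges_all) (rule summable_bessel_ratio'_coeff)

lemma bessel_ratio_has_derivative: "(bessel_ratio has_real_derivative bessel_ratio' z) (at z)"
  unfolding bessel_ratio_def bessel_ratio'_def
  by (rule termdiffs_strong_converges_everywhere) (rule summable_bessel_ratio_coeff)

lemma bessel_ratio'_has_derivative: "(bessel_ratio' has_real_derivative bessel_ratio'' z) (at z)"
  unfolding bessel_ratio'_def bessel_ratio''_def
  by (rule termdiffs_strong_converges_everywhere) (rule summable_bessel_ratio'_coeff)

lemma bessel_ratio_coeff_Suc:
  "4 * real (Suc n) * real (Suc (Suc n)) * bessel_ratio_coeff (Suc n) = bessel_ratio_coeff n"
  unfolding bessel_ratio_coeff_def Suc_eq_plus1[symmetric] fact_Suc power_Suc of_nat_mult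
  by (simp add: divide_simps del: of_nat_Suc)

lemma bessel_ratio_ode: "4 * z * bessel_ratio'' z + 8 * bessel_ratio' z = bessel_ratio z"
proof -
  let ?a = "\<lambda>n. bessel_ratio_coeff n * z ^ n - 8 * (diffs bessel_ratio_coeff n * z ^ n)"
  have "?a sums (bessel_ratio z - 8 * bessel_ratio' z)"
    unfolding bessel_ratio_def bessel_ratio'_def
    by (intro sums_diff sums_mult summable_sums summable_bessel_ratio_coeff
        summable_bessel_ratio'_coeff)
  moreover have "?a 0 = 0"
    by (simp add: bessel_ratio_coeff_def diffs_def)
  ultimately have "(\<lambda>n. ?a (Suc n)) sums (bessel_ratio z - 8 * bessel_ratio' z)"
    using sums_Suc_iff[of ?a] by simp
  moreover have "?a (Suc n) = 4 * z * (diffs (diffs bessel_ratio_coeff) n * z ^ n)" for n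
  proof -
    have "bessel_ratio_coeff (Suc n)
        = 4 * real (Suc (Suc n)) * real (Suc (Suc (Suc n))) * bessel_ratio_coeff (Suc (Suc n))"
      using bessel_ratio_coeff_Suc[of "Suc n"] by simp
    then show ?thesis
      unfolding diffs_def by (simp add: algebra_simps)
  qed
  moreover have "(\<lambda>n. 4 * z * (diffs (diffs bessel_ratio_coeff) n * z ^ n)) sums (4 * z * bessel_ratio'' z)"
    unfolding bessel_ratio''_def by (intro sums_mult summable_sums summable_bessel_ratio''_coeff)
  ultimately show ?thesis
    using sums_unique2 by fastforce
qed

lemma bessel_ratio_0: "bessel_ratio 0 = 1 / 2"
  using powser_zero[of bessel_ratio_coeff]
  by (simp add: bessel_ratio_def bessel_ratio_coeff_def)

lemma besselI1_div_sqrt: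
  assumes "a \<ge> 0"
  shows "besselI1_div (sqrt a) = bessel_ratio a"
proof (cases "a = 0")
  case True
  then show ?thesis by (simp add: besselI1_div_def bessel_ratio_0)
next
  case False
  let ?s = "sqrt a"
  have "(\<lambda>k. ?s * (bessel_ratio_coeff k * a ^ k)) sums (?s * bessel_ratio a)"
    unfolding bessel_ratio_def by (intro sums_mult summable_sums summable_bessel_ratio_coeff)
  moreover have "?s * (bessel_ratio_coeff k * a ^ k) = (?s / 2) ^ (2 * k + 1) / (fact k * fact (k + 1))"
    for k
  proof -
    have "?s ^ k * ?s ^ k = a ^ k"
      using assms by (simp add: power_mult_distrib[symmetric])
    moreover have "(4::real) ^ k = 2 ^ k * 2 ^ k"
      using power_mult_distrib[of "2::real" 2 k] by simp
    moreover have "(?s / 2) ^ (2 * k + 1) = ?s * (?s ^ k * ?s ^ k) / (2 * (2 ^ k * 2 ^ k))"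
      by (simp add: power_add power_mult power2_eq_square power_divide power_mult_distrib field_simps)
    ultimately show ?thesis
      unfolding bessel_ratio_coeff_def by simp
  qed
  ultimately have "besselI 1 ?s = ?s * bessel_ratio a"
    unfolding besselI_def by (simp add: sums_iff)
  then show ?thesis
    using assms False by (simp add: besselI1_div_def)
qed

lemma bessel_ratio_chain [derivative_intros]:
  "(g has_real_derivative g') (at x within S) \<Longrightarrow>
    ((\<lambda>x. bessel_ratio (g x)) has_real_derivative bessel_ratio' (g x) * g') (at x within S)"
  using DERIV_chain[OF bessel_ratio_has_derivative] by (simp add: o_def)

lemma bessel_ratio'_chain [derivative_intros]:
  "(g has_real_derivative g') (at x within S) \<Longrightarrow>
    ((\<lambda>x. bessel_ratio' (g x)) has_real_derivative bessel_ratio'' (g x) * g') (at x within S)"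
  using DERIV_chain[OF bessel_ratio'_has_derivative] by (simp add: o_def)

lemma continuous_on_bessel_ratio [continuous_intros]:
  "continuous_on S g \<Longrightarrow> continuous_on S (\<lambda>x. bessel_ratio (g x))"
  by (rule continuous_on_compose2[of UNIV])
    (auto intro: DERIV_isCont[OF bessel_ratio_has_derivative] continuous_at_imp_continuous_on)

lemma continuous_on_bessel_ratio' [continuous_intros]:
  "continuous_on S g \<Longrightarrow> continuous_on S (\<lambda>x. bessel_ratio' (g x))"
  by (rule continuous_on_compose2[of UNIV])
    (auto intro: DERIV_isCont[OF bessel_ratio'_has_derivative] continuous_at_imp_continuous_on)

lemma continuous_on_bessel_ratio'' [continuous_intros]:
  assumes "continuous_on S g"
  shows "continuous_on S (\<lambda>x. bessel_ratio'' (g x))"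
proof -
  have "(bessel_ratio'' has_real_derivative (\<Sum>k. diffs (diffs (diffs bessel_ratio_coeff)) k * z ^ k)) (at z)"
    for z
    unfolding bessel_ratio''_def
    by (rule termdiffs_strong_converges_everywhere) (rule summable_bessel_ratio''_coeff)
  then have "continuous_on UNIV bessel_ratio''"
    by (auto intro: DERIV_isCont continuous_at_imp_continuous_on)
  then show ?thesis
    by (rule continuous_on_compose2[OF _ assms]) auto
qed


section \<open>The kernel \<open>K\<close>\<close>

text \<open>The kernel \<open>K\<close> of the statement is \<open>bessel_kernel (lam / eps)\<close> on \<open>\<bar>y\<bar> \<le> \<bar>x\<bar>\<close>;
  in this form it is visibly smooth on the whole plane.\<close>

definition bessel_kernel :: "real \<Rightarrow> real \<Rightarrow> real \<Rightarrow> real" where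
  "bessel_kernel c x y = - c * x * bessel_ratio (c * (x\<^sup>2 - y\<^sup>2))"

definition bessel_kernel_x :: "real \<Rightarrow> real \<Rightarrow> real \<Rightarrow> real" where
  "bessel_kernel_x c x y =
     - c * bessel_ratio (c * (x\<^sup>2 - y\<^sup>2)) - 2 * c\<^sup>2 * x\<^sup>2 * bessel_ratio' (c * (x\<^sup>2 - y\<^sup>2))"

definition bessel_kernel_xx :: "real \<Rightarrow> real \<Rightarrow> real \<Rightarrow> real" where
  "bessel_kernel_xx c x y =
     - 6 * c\<^sup>2 * x * bessel_ratio' (c * (x\<^sup>2 - y\<^sup>2)) - 4 * c ^ 3 * x ^ 3 * bessel_ratio'' (c * (x\<^sup>2 - y\<^sup>2))"

definition bessel_kernel_y :: "real \<Rightarrow> real \<Rightarrow> real \<Rightarrow> real" where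
  "bessel_kernel_y c x y = 2 * c\<^sup>2 * x * y * bessel_ratio' (c * (x\<^sup>2 - y\<^sup>2))"

definition bessel_kernel_yy :: "real \<Rightarrow> real \<Rightarrow> real \<Rightarrow> real" where
  "bessel_kernel_yy c x y =
     2 * c\<^sup>2 * x * bessel_ratio' (c * (x\<^sup>2 - y\<^sup>2)) - 4 * c ^ 3 * x * y\<^sup>2 * bessel_ratio'' (c * (x\<^sup>2 - y\<^sup>2))"

lemma bessel_kernel_deriv_x:
  "((\<lambda>s. bessel_kernel c s y) has_real_derivative bessel_kernel_x c x y) (at x within S)"
  unfolding bessel_kernel_def bessel_kernel_x_def
  by (auto intro!: derivative_eq_intros simp: power2_eq_square algebra_simps)

lemma bessel_kernel_x_deriv_x:
  "((\<lambda>s. bessel_kernel_x c s y) has_real_derivative bessel_kernel_xx c x y) (at x within S)"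
  unfolding bessel_kernel_x_def bessel_kernel_xx_def
  by (auto intro!: derivative_eq_intros simp: power2_eq_square power3_eq_cube algebra_simps)

lemma bessel_kernel_deriv_y:
  "((\<lambda>s. bessel_kernel c x s) has_real_derivative bessel_kernel_y c x y) (at y within S)"
  unfolding bessel_kernel_def bessel_kernel_y_def
  by (auto intro!: derivative_eq_intros simp: power2_eq_square algebra_simps)

lemma bessel_kernel_y_deriv_y:
  "((\<lambda>s. bessel_kernel_y c x s) has_real_derivative bessel_kernel_yy c x y) (at y within S)"
  unfolding bessel_kernel_y_def bessel_kernel_yy_def
  by (auto intro!: derivative_eq_intros simp: power2_eq_square power3_eq_cube algebra_simps)

lemma bessel_kernel_pde:
  "bessel_kernel_xx c x y - bessel_kernel_yy c x y = c * bessel_kernel c x y"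
proof -
  let ?z = "c * (x\<^sup>2 - y\<^sup>2)"
  have "bessel_kernel_xx c x y - bessel_kernel_yy c x y
      = - c\<^sup>2 * x * (4 * ?z * bessel_ratio'' ?z + 8 * bessel_ratio' ?z)"
    unfolding bessel_kernel_xx_def bessel_kernel_yy_def
    by (simp add: power2_eq_square power3_eq_cube algebra_simps)
  also have "\<dots> = c * bessel_kernel c x y"
    unfolding bessel_ratio_ode bessel_kernel_def by (simp add: power2_eq_square)
  finally show ?thesis .
qed

lemma bessel_kernel_diag: "bessel_kernel c x x = - c * x / 2"
  by (simp add: bessel_kernel_def bessel_ratio_0)

lemma bessel_kernel_y_0: "bessel_kernel_y c x 0 = 0"
  by (simp add: bessel_kernel_y_def)

lemma bessel_kernel_x_plus_y_diag: "bessel_kernel_x c x x + bessel_kernel_y c x x = - c / 2"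
  by (simp add: bessel_kernel_x_def bessel_kernel_y_def bessel_ratio_0 power2_eq_square)

lemma kerK_eq_bessel_kernel:
  assumes "eps > 0" "lam \<ge> 0" "\<bar>y\<bar> \<le> \<bar>x\<bar>"
  shows "kerK eps lam x y = bessel_kernel (lam / eps) x y"
proof -
  have "lam * (x\<^sup>2 - y\<^sup>2) / eps \<ge> 0"
    using assms by (simp add: abs_le_square_iff)
  then show ?thesis
    unfolding kerK_def bessel_kernel_def by (simp add: besselI1_div_sqrt)
qed

lemma continuous_on_bessel_kernels:
  "continuous_on UNIV (\<lambda>(x, y). bessel_kernel c x y)"
  "continuous_on UNIV (\<lambda>(x, y). bessel_kernel_x c x y)"
  "continuous_on UNIV (\<lambda>(x, y). bessel_kernel_xx c x y)"
  "continuous_on UNIV (\<lambda>(x, y). bessel_kernel_yy c x y)"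
  unfolding split_beta bessel_kernel_def bessel_kernel_x_def bessel_kernel_xx_def bessel_kernel_yy_def
  by (intro continuous_intros)+

lemma kerK_has_derivatives_x:
  assumes "eps > 0" "lam \<ge> 0" "\<bar>y\<bar> < x"
  shows "((\<lambda>s. kerK eps lam s y) has_real_derivative bessel_kernel_x (lam / eps) x y) (at x)"
    and "(deriv (\<lambda>s. kerK eps lam s y) has_real_derivative bessel_kernel_xx (lam / eps) x y) (at x)"
proof -
  have "kerK eps lam s y = bessel_kernel (lam / eps) s y" if "s \<in> {\<bar>y\<bar><..}" for s
    using that assms by (intro kerK_eq_bessel_kernel) auto
  from has_real_derivatives_transform_open[where S="{\<bar>y\<bar><..}", OF _ _ this bessel_kernel_deriv_x bessel_kernel_x_deriv_x]
  show "((\<lambda>s. kerK eps lam s y) has_real_derivative bessel_kernel_x (lam / eps) x y) (at x)"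
    and "(deriv (\<lambda>s. kerK eps lam s y) has_real_derivative bessel_kernel_xx (lam / eps) x y) (at x)"
    using assms by auto
qed

lemma kerK_has_derivatives_y:
  assumes "eps > 0" "lam \<ge> 0" "\<bar>y\<bar> < x"
  shows "((\<lambda>s. kerK eps lam x s) has_real_derivative bessel_kernel_y (lam / eps) x y) (at y)"
    and "(deriv (\<lambda>s. kerK eps lam x s) has_real_derivative bessel_kernel_yy (lam / eps) x y) (at y)"
proof -
  have "kerK eps lam x s = bessel_kernel (lam / eps) x s" if "s \<in> {-x<..<x}" for s
    using that assms by (intro kerK_eq_bessel_kernel) auto
  from has_real_derivatives_transform_open[where S="{-x<..<x}", OF _ _ this bessel_kernel_deriv_y bessel_kernel_y_deriv_y]
  show "((\<lambda>s. kerK eps lam x s) has_real_derivative bessel_kernel_y (lam / eps) x y) (at y)"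
    and "(deriv (\<lambda>s. kerK eps lam x s) has_real_derivative bessel_kernel_yy (lam / eps) x y) (at y)"
    using assms by (auto simp: abs_less_iff)
qed

lemma kerK_pde:
  assumes "eps > 0" "lam \<ge> 0" "0 < y" "y < x"
  shows "(\<lambda>s. kerK eps lam s y) differentiable (at x) \<and>
       (\<lambda>s. deriv (\<lambda>s'. kerK eps lam s' y) s) differentiable (at x) \<and>
       (\<lambda>s. kerK eps lam x s) differentiable (at y) \<and>
       (\<lambda>s. deriv (\<lambda>s'. kerK eps lam x s') s) differentiable (at y) \<and>
       deriv (\<lambda>s. deriv (\<lambda>s'. kerK eps lam s' y) s) x
         - deriv (\<lambda>s. deriv (\<lambda>s'. kerK eps lam x s') s) y
         = lam / eps * kerK eps lam x y"
proof -
  have "\<bar>y\<bar> < x"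
    using assms by simp
  note dx = kerK_has_derivatives_x[OF assms(1,2) this] and dy = kerK_has_derivatives_y[OF assms(1,2) this]
  have "kerK eps lam x y = bessel_kernel (lam / eps) x y"
    using assms by (intro kerK_eq_bessel_kernel) auto
  then show ?thesis
    using dx dy DERIV_imp_deriv[OF dx(2)] DERIV_imp_deriv[OF dy(2)] bessel_kernel_pde
    by (auto simp: real_differentiable_def)
qed

lemma kerK_neumann_at_0:
  assumes "eps > 0" "lam \<ge> 0" "x \<ge> 0"
  shows "(\<lambda>s. kerK eps lam x s) differentiable (at 0) \<and> deriv (\<lambda>s. kerK eps lam x s) 0 = 0"
proof (cases "x = 0")
  case True
  then have "(\<lambda>s. kerK eps lam x s) = (\<lambda>s. 0)"
    by (simp add: kerK_def fun_eq_iff)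
  then show ?thesis by simp
next
  case False
  then have "((\<lambda>s. kerK eps lam x s) has_real_derivative 0) (at 0)"
    using kerK_has_derivatives_y(1)[OF assms(1,2), of 0 x] assms by (simp add: bessel_kernel_y_0)
  then show ?thesis
    using DERIV_imp_deriv real_differentiable_def by blast
qed

lemma kerK_diagonal: "kerK eps lam x x = - (lam / (2 * eps)) * x"
  by (simp add: kerK_def besselI1_div_def)


section \<open>The transformation of the observer\<close>

lemma classical_sol_cong:
  assumes sol: "classical_sol v vx vxx vt"
    and eq: "\<And>x t. x \<in> {0..1} \<Longrightarrow> t > 0 \<Longrightarrow> w x t = v x t"
  shows "classical_sol w vx vxx vt"
proof -
  have "((\<lambda>s. w s t) has_real_derivative vx x t) (at x within {0..1})"
    if "x \<in> {0..1}" "t > 0" for x t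
  proof (rule has_field_derivative_transform_within[OF _ zero_less_one that(1)])
    show "((\<lambda>s. v s t) has_real_derivative vx x t) (at x within {0..1})"
      using sol that unfolding classical_sol_def by blast
  qed (use that eq in simp)
  moreover have "((\<lambda>s. w x s) has_real_derivative vt x t) (at t)"
    if "x \<in> {0..1}" "t > 0" for x t
  proof (rule has_field_derivative_transform_within_open[where S="{0<..}"])
    show "((\<lambda>s. v x s) has_real_derivative vt x t) (at t)"
      using sol that unfolding classical_sol_def by blast
  qed (use that eq in simp_all)
  moreover have "continuous_on ({0..1} \<times> {0<..}) (\<lambda>(x, t). w x t)"
  proof (rule continuous_on_eq)
    show "continuous_on ({0..1} \<times> {0<..}) (\<lambda>(x, t). v x t)"
      using sol unfolding classical_sol_def by blast
  qed (auto simp: eq)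
  ultimately show ?thesis
    using sol unfolding classical_sol_def by blast
qed

lemma classical_sol_has_derivative_integral_time:
  assumes sol: "classical_sol v vx vxx vt" and "x \<in> {0..1}" "t > 0" "continuous_on {0..x} g"
  shows "((\<lambda>s. integral {0..x} (\<lambda>y. g y * v y s)) has_real_derivative
           integral {0..x} (\<lambda>y. g y * vt y t)) (at t)"
proof (rule has_real_derivative_integral_param[where T="{0<..}"])
  have "{0..x} \<times> {0<..} \<subseteq> {0..1} \<times> {0::real<..}"
    using assms(2) by auto
  with sol show "continuous_on ({0..x} \<times> {0<..}) (\<lambda>(y, s). v y s)"
    and "continuous_on ({0..x} \<times> {0<..}) (\<lambda>(y, s). vt y s)"
    unfolding classical_sol_def by (meson continuous_on_subset)+
  show "((\<lambda>s. v y s) has_real_derivative vt y s) (at s)" if "y \<in> {0..x}" "s \<in> {0<..}" for y s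
    using sol that assms(2) unfolding classical_sol_def by auto
qed (use assms in auto)

lemma classical_sol_bessel_volterra:
  assumes "classical_sol v vx vxx vt"
  shows "classical_sol (\<lambda>x t. v x t - integral {0..x} (\<lambda>y. bessel_kernel c x y * v y t))
     (\<lambda>x t. vx x t + c * x / 2 * v x t - integral {0..x} (\<lambda>y. bessel_kernel_x c x y * v y t))
     (\<lambda>x t. vxx x t + c / 2 * v x t + c * x / 2 * vx x t - bessel_kernel_x c x x * v x t
             - integral {0..x} (\<lambda>y. bessel_kernel_xx c x y * v y t))
     (\<lambda>x t. vt x t - integral {0..x} (\<lambda>y. bessel_kernel c x y * vt y t))"
proof -
  note sol = assms[unfolded classical_sol_def]
  note K = continuous_on_bessel_kernels[of c]
  show ?thesis
    unfolding classical_sol_def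
  proof (intro conjI ballI allI impI)
    fix x t :: real assume x: "x \<in> {0..1}" and t: "t > 0"
    have Dx: "((\<lambda>s. v s t) has_real_derivative vx x t) (at x within {0..1})"
      and Dxx: "((\<lambda>s. vx s t) has_real_derivative vxx x t) (at x within {0..1})"
      and Dt: "((\<lambda>s. v x s) has_real_derivative vt x t) (at t)"
      using sol x t by blast+
    have v: "continuous_on {0..1} (\<lambda>y. v y t)"
      using sol continuous_on_section[of "{0..1}" "{0<..}" v] t by blast
    have "((\<lambda>s. v s t - integral {0..s} (\<lambda>y. bessel_kernel c s y * v y t)) has_real_derivative
        vx x t - (bessel_kernel c x x * v x t + integral {0..x} (\<lambda>y. bessel_kernel_x c x y * v y t)))
        (at x within {0..1})"
      by (rule DERIV_diff[OF Dx has_real_derivative_volterra_integral[OF bessel_kernel_deriv_x K(1,2) v x]])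
    then show "((\<lambda>s. v s t - integral {0..s} (\<lambda>y. bessel_kernel c s y * v y t)) has_real_derivative
        vx x t + c * x / 2 * v x t - integral {0..x} (\<lambda>y. bessel_kernel_x c x y * v y t))
        (at x within {0..1})"
      by (simp add: bessel_kernel_diag algebra_simps)
    have "((\<lambda>s. c * s / 2) has_real_derivative c / 2) (at x within {0..1})"
      by (auto intro!: derivative_eq_intros)
    from DERIV_diff[OF DERIV_add[OF Dxx DERIV_mult[OF this Dx]]
        has_real_derivative_volterra_integral[OF bessel_kernel_x_deriv_x K(2,3) v x]]
    show "((\<lambda>s. vx s t + c * s / 2 * v s t - integral {0..s} (\<lambda>y. bessel_kernel_x c s y * v y t))
        has_real_derivative vxx x t + c / 2 * v x t + c * x / 2 * vx x t - bessel_kernel_x c x x * v x t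
          - integral {0..x} (\<lambda>y. bessel_kernel_xx c x y * v y t)) (at x within {0..1})"
      by (simp add: algebra_simps)
    have "continuous_on {0..x} (bessel_kernel c x)"
      unfolding bessel_kernel_def by (intro continuous_intros)
    from DERIV_diff[OF Dt classical_sol_has_derivative_integral_time[OF assms x t this]]
    show "((\<lambda>s. v x s - integral {0..x} (\<lambda>y. bessel_kernel c x y * v y s)) has_real_derivative
        vt x t - integral {0..x} (\<lambda>y. bessel_kernel c x y * vt y t)) (at t)" .
  next
    have cont: "continuous_on ({0..1} \<times> {0<..}) (\<lambda>(x, t). v x t)"
      "continuous_on ({0..1} \<times> {0<..}) (\<lambda>(x, t). vx x t)"
      "continuous_on ({0..1} \<times> {0<..}) (\<lambda>(x, t). vxx x t)"
      "continuous_on ({0..1} \<times> {0<..}) (\<lambda>(x, t). vt x t)"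
      using sol by blast+
    then have "continuous_on ({0..1} \<times> {0<..}) (\<lambda>(x, t). vx x t + c * x / 2 * v x t)"
      "continuous_on ({0..1} \<times> {0<..}) (\<lambda>(x, t). vxx x t + c / 2 * v x t + c * x / 2 * vx x t
         - bessel_kernel_x c x x * v x t)"
      unfolding split_beta bessel_kernel_x_def by (auto intro!: continuous_intros)
    with cont show "continuous_on ({0..1} \<times> {0<..})
        (\<lambda>(x, t). v x t - integral {0..x} (\<lambda>y. bessel_kernel c x y * v y t))"
      and "continuous_on ({0..1} \<times> {0<..}) (\<lambda>(x, t). vx x t + c * x / 2 * v x t
        - integral {0..x} (\<lambda>y. bessel_kernel_x c x y * v y t))"
      and "continuous_on ({0..1} \<times> {0<..}) (\<lambda>(x, t). vxx x t + c / 2 * v x t + c * x / 2 * vx x t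
        - bessel_kernel_x c x x * v x t - integral {0..x} (\<lambda>y. bessel_kernel_xx c x y * v y t))"
      and "continuous_on ({0..1} \<times> {0<..})
        (\<lambda>(x, t). vt x t - integral {0..x} (\<lambda>y. bessel_kernel c x y * vt y t))"
      by (auto intro: continuous_on_diff_volterra_integral K)
  qed
qed

lemma bessel_volterra_interior_pde:
  fixes v v' v'' vt p :: "real \<Rightarrow> real"
  assumes x: "0 < x"
    and deriv: "\<And>y. y \<in> {0..x} \<Longrightarrow> (v has_real_derivative v' y) (at y within {0..x})"
    and deriv': "\<And>y. y \<in> {0..x} \<Longrightarrow> (v' has_real_derivative v'' y) (at y within {0..x})"
    and cont: "continuous_on {0..x} v''" "continuous_on {0..x} vt"
    and pde: "\<And>y. y \<in> {0<..x} \<Longrightarrow> vt y = eps * v'' y + eps * c * v y + p y * e"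
    and bc: "v' 0 = - (c / 2) * e"
  shows "vt x - integral {0..x} (\<lambda>y. bessel_kernel c x y * vt y)
     = eps * (v'' x + c / 2 * v x + c * x / 2 * v' x - bessel_kernel_x c x x * v x
              - integral {0..x} (\<lambda>y. bessel_kernel_xx c x y * v y))
       + (p x - eps * c / 2 * bessel_kernel c x 0 - integral {0..x} (\<lambda>y. bessel_kernel c x y * p y)) * e"
proof -
  let ?K = "bessel_kernel c x" and ?Ky = "bessel_kernel_y c x" and ?Kyy = "bessel_kernel_yy c x"
  have "continuous_on {0..x} v"
    using deriv by (meson DERIV_continuous continuous_on_eq_continuous_within)
  then have int: "(\<lambda>y. bessel_kernel c x y * v y) integrable_on {0..x}"
    "(\<lambda>y. bessel_kernel_xx c x y * v y) integrable_on {0..x}"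
    "(\<lambda>y. bessel_kernel_yy c x y * v y) integrable_on {0..x}"
    "(\<lambda>y. bessel_kernel c x y * v'' y) integrable_on {0..x}"
    "(\<lambda>y. bessel_kernel c x y * vt y) integrable_on {0..x}"
    using x cont by (auto intro!: integrable_on_kernel_product continuous_on_bessel_kernels)
  define A where "A = integral {0..x} (\<lambda>y. ?K y * v'' y)"
  define B where "B = integral {0..x} (\<lambda>y. ?K y * v y)"
  define E where "E = integral {0..x} (\<lambda>y. ?Kyy y * v y)"
  define G where "G = integral {0..x} (\<lambda>y. bessel_kernel_xx c x y * v y)"
  define H where "H = integral {0..x} (\<lambda>y. ?K y * vt y)"
  define P where "P = integral {0..x} (\<lambda>y. ?K y * p y)"
  have "H - eps * A - eps * c * B = integral {0..x} (\<lambda>y. ?K y * vt y - eps * (?K y * v'' y) - eps * c * (?K y * v y))"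
    unfolding H_def A_def B_def using int
    by (simp add: integral_diff integrable_diff integrable_on_mult_right)
  also have "\<dots> = integral {0..x} (\<lambda>y. ?K y * p y * e)"
    by (rule integral_spike[where S="{0}"]) (auto simp: pde algebra_simps)
  finally have H: "H = eps * A + eps * c * B + P * e"
    unfolding P_def by simp
  have "((\<lambda>y. ?K y * v'' y - ?Kyy y * v y) has_integral
      (?K x * v' x - ?Ky x * v x) - (?K 0 * v' 0 - ?Ky 0 * v 0)) {0..x}"
    using x deriv deriv' by (intro green_identity bessel_kernel_deriv_y bessel_kernel_y_deriv_y) auto
  from integral_unique[OF this]
  have "A - E = (?K x * v' x - ?Ky x * v x) - ?K 0 * v' 0"
    unfolding A_def E_def using int by (simp add: integral_diff bessel_kernel_y_0)
  then have A: "A = E + (?K x * v' x - ?Ky x * v x) - ?K 0 * v' 0"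
    by simp
  have "G = integral {0..x} (\<lambda>y. ?Kyy y * v y + c * (?K y * v y))"
    unfolding G_def using bessel_kernel_pde[of c x]
    by (intro integral_cong) (simp add: algebra_simps eq_diff_eq[symmetric])
  then have G: "G = E + c * B"
    unfolding E_def B_def using int by (simp add: integral_add integrable_on_mult_right)
  have Ky: "?Ky x = - c / 2 - bessel_kernel_x c x x"
    using bessel_kernel_x_plus_y_diag[of c x] by simp
  have "vt x = eps * v'' x + eps * c * v x + p x * e"
    using pde x by simp
  then show ?thesis
    unfolding H_def[symmetric] G_def[symmetric] P_def[symmetric]
    by (simp add: H A G Ky bc bessel_kernel_diag algebra_simps)
qed

lemma integral_kerK_eq_bessel_kernel:
  assumes "eps > 0" "lam \<ge> 0" "x \<ge> 0"
  shows "integral {0..x} (\<lambda>y. kerK eps lam x y * f y)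
       = integral {0..x} (\<lambda>y. bessel_kernel (lam / eps) x y * f y)"
  using assms by (intro integral_cong) (simp add: kerK_eq_bessel_kernel)

lemma integral_control_gain:
  assumes "eps > 0" "lam \<ge> 0" "continuous_on {0..1} v"
  shows "integral {0..1} (\<lambda>y. (r * kerK eps lam 1 y + deriv (\<lambda>s. kerK eps lam s y) 1) * v y)
       = r * integral {0..1} (\<lambda>y. bessel_kernel (lam / eps) 1 y * v y)
         + integral {0..1} (\<lambda>y. bessel_kernel_x (lam / eps) 1 y * v y)"
proof -
  let ?c = "lam / eps"
  have "integral {0..1} (\<lambda>y. (r * kerK eps lam 1 y + deriv (\<lambda>s. kerK eps lam s y) 1) * v y)
      = integral {0..1} (\<lambda>y. r * (bessel_kernel ?c 1 y * v y) + bessel_kernel_x ?c 1 y * v y)"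
  proof (rule integral_spike[where S="{1}"])
    fix y :: real assume "y \<in> {0..1} - {1}"
    then have y: "\<bar>y\<bar> < 1"
      by auto
    then have "deriv (\<lambda>s. kerK eps lam s y) 1 = bessel_kernel_x ?c 1 y"
      using assms by (intro DERIV_imp_deriv kerK_has_derivatives_x) auto
    moreover have "kerK eps lam 1 y = bessel_kernel ?c 1 y"
      using assms y by (intro kerK_eq_bessel_kernel) auto
    ultimately show "r * (bessel_kernel ?c 1 y * v y) + bessel_kernel_x ?c 1 y * v y
        = (r * kerK eps lam 1 y + deriv (\<lambda>s. kerK eps lam s y) 1) * v y"
      by (simp add: algebra_simps)
  qed simp
  also have "\<dots> = r * integral {0..1} (\<lambda>y. bessel_kernel ?c 1 y * v y)
      + integral {0..1} (\<lambda>y. bessel_kernel_x ?c 1 y * v y)"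
    using assms(3)
    by (simp add: integral_add integrable_on_mult_right integrable_on_kernel_product
        continuous_on_bessel_kernels)
  finally show ?thesis .
qed

lemma gfun_eq_bessel_kernel:
  assumes "eps > 0" "lam \<ge> 0" "x \<ge> 0"
  shows "gfun eps lam q x = obs_p1 eps lam q x - lam / 2 * bessel_kernel (lam / eps) x 0
           - integral {0..x} (\<lambda>y. bessel_kernel (lam / eps) x y * obs_p1 eps lam q y)"
  using assms by (simp add: gfun_def kerK_eq_bessel_kernel integral_kerK_eq_bessel_kernel)

lemma observer_interior_transformed:
  assumes ep: "eps > 0" and lam: "lam \<ge> 0" and c: "c = lam / eps"
    and sol: "classical_sol uh uhx uhxx uht" and t: "t > 0" and x: "x \<in> {0<..<1}"
    and pde: "\<And>y. y \<in> {0<..<1} \<Longrightarrow>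
      uht y t = eps * uhxx y t + lam * uh y t + obs_p1 eps lam q y * e"
    and bc0: "uhx 0 t = - (lam / (2 * eps)) * e"
  shows "uht x t - integral {0..x} (\<lambda>y. bessel_kernel c x y * uht y t)
      = eps * (uhxx x t + c / 2 * uh x t + c * x / 2 * uhx x t - bessel_kernel_x c x x * uh x t
              - integral {0..x} (\<lambda>y. bessel_kernel_xx c x y * uh y t)) + gfun eps lam q x * e"
proof -
  have lam_eq: "lam = eps * c"
    using ep c by simp
  have sub: "{0..x} \<subseteq> {0..1}"
    using x by auto
  note sol' = sol[unfolded classical_sol_def]
  have "gfun eps lam q x = obs_p1 eps lam q x - eps * c / 2 * bessel_kernel c x 0
      - integral {0..x} (\<lambda>y. bessel_kernel c x y * obs_p1 eps lam q y)"
    using gfun_eq_bessel_kernel[OF ep lam, of x q] x unfolding c[symmetric] by (simp add: lam_eq)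
  moreover have "uht x t - integral {0..x} (\<lambda>y. bessel_kernel c x y * uht y t)
      = eps * (uhxx x t + c / 2 * uh x t + c * x / 2 * uhx x t - bessel_kernel_x c x x * uh x t
              - integral {0..x} (\<lambda>y. bessel_kernel_xx c x y * uh y t))
        + (obs_p1 eps lam q x - eps * c / 2 * bessel_kernel c x 0
           - integral {0..x} (\<lambda>y. bessel_kernel c x y * obs_p1 eps lam q y)) * e"
  proof (rule bessel_volterra_interior_pde)
    fix y assume "y \<in> {0..x}"
    then have "((\<lambda>y. uh y t) has_real_derivative uhx y t) (at y within {0..1})"
      and "((\<lambda>y. uhx y t) has_real_derivative uhxx y t) (at y within {0..1})"
      using sol' sub t by blast+
    then show "((\<lambda>y. uh y t) has_real_derivative uhx y t) (at y within {0..x})"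
      and "((\<lambda>y. uhx y t) has_real_derivative uhxx y t) (at y within {0..x})"
      by (auto intro: DERIV_subset[OF _ sub])
  next
    have "continuous_on {0..1} (\<lambda>y. uhxx y t)" "continuous_on {0..1} (\<lambda>y. uht y t)"
      using sol' continuous_on_section[of "{0..1}" "{0<..}" _ t] t by blast+
    then show "continuous_on {0..x} (\<lambda>y. uhxx y t)" "continuous_on {0..x} (\<lambda>y. uht y t)"
      by (auto intro: continuous_on_subset[OF _ sub])
    show "uht y t = eps * uhxx y t + eps * c * uh y t + obs_p1 eps lam q y * e" if "y \<in> {0<..x}" for y
      using pde that x by (simp add: lam_eq)
    show "uhx 0 t = - (c / 2) * e"
      using bc0 by (simp add: c)
  qed (use x in simp)
  ultimately show ?thesis
    by simp
qed

lemma observer_boundary_1_transformed: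
  assumes ep: "eps > 0" and lam: "lam \<ge> 0" and c: "c = lam / eps" and v: "continuous_on {0..1} v"
    and bc1: "v1' + q * v 1 = integral {0..1}
      (\<lambda>y. ((q - lam / (2 * eps)) * kerK eps lam 1 y + deriv (\<lambda>s. kerK eps lam s y) 1) * v y)"
  shows "v1' + c * 1 / 2 * v 1 - integral {0..1} (\<lambda>y. bessel_kernel_x c 1 y * v y)
       = - (q - lam / (2 * eps)) * (v 1 - integral {0..1} (\<lambda>y. kerK eps lam 1 y * v y))"
proof -
  have "q - lam / (2 * eps) = q - c / 2"
    using c by simp
  moreover have "integral {0..1} (\<lambda>y. kerK eps lam 1 y * v y) = integral {0..1} (\<lambda>y. bessel_kernel c 1 y * v y)"
    unfolding c using ep lam by (rule integral_kerK_eq_bessel_kernel) simp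
  ultimately show ?thesis
    using bc1 unfolding integral_control_gain[OF ep lam v] c[symmetric]
    by (simp add: algebra_simps)
qed

lemma observer_target_system:
  assumes ep: "eps > 0" and lam: "lam \<ge> 0"
    and sol: "classical_sol uh uhx uhxx uht"
    and observer: "\<forall>t>0. (\<forall>x\<in>{0<..<1}. uht x t = eps * uhxx x t + lam * uh x t
                                    + obs_p1 eps lam q x * (u 0 t - uh 0 t)) \<and>
      uhx 0 t = - (lam / (2 * eps)) * (u 0 t - uh 0 t) \<and>
      uhx 1 t + q * uh 1 t = U t"
    and control: "\<forall>t>0. U t = integral {0..1}
      (\<lambda>y. ((q - lam / (2 * eps)) * kerK eps lam 1 y + deriv (\<lambda>s. kerK eps lam s y) 1) * uh y t)"
    and error: "\<forall>t>0. \<forall>x\<in>{0..1}. u x t - uh x t = wt x t - integral {0..x} (\<lambda>y. P x y * wt y t)"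
  shows "\<exists>whx whxx wht.
    classical_sol (\<lambda>x t. uh x t - integral {0..x} (\<lambda>y. kerK eps lam x y * uh y t)) whx whxx wht \<and>
    (\<forall>t>0. (\<forall>x\<in>{0<..<1}. wht x t = eps * whxx x t + gfun eps lam q x * wt 0 t) \<and>
      whx 0 t = - (lam / (2 * eps)) * wt 0 t \<and>
      whx 1 t = - (q - lam / (2 * eps)) * (uh 1 t - integral {0..1} (\<lambda>y. kerK eps lam 1 y * uh y t)))"
proof -
  define c where "c = lam / eps"
  have error0: "u 0 t - uh 0 t = wt 0 t" if "t > 0" for t
    using error that by auto
  show ?thesis
  proof (intro exI conjI allI impI ballI)
    show "classical_sol (\<lambda>x t. uh x t - integral {0..x} (\<lambda>y. kerK eps lam x y * uh y t))
      (\<lambda>x t. uhx x t + c * x / 2 * uh x t - integral {0..x} (\<lambda>y. bessel_kernel_x c x y * uh y t))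
      (\<lambda>x t. uhxx x t + c / 2 * uh x t + c * x / 2 * uhx x t - bessel_kernel_x c x x * uh x t
              - integral {0..x} (\<lambda>y. bessel_kernel_xx c x y * uh y t))
      (\<lambda>x t. uht x t - integral {0..x} (\<lambda>y. bessel_kernel c x y * uht y t))"
      by (rule classical_sol_cong[OF classical_sol_bessel_volterra[OF sol]])
        (simp add: integral_kerK_eq_bessel_kernel ep lam c_def)
  next
    fix t x :: real assume "t > 0" and "x \<in> {0<..<1}"
    with observer error0 show "uht x t - integral {0..x} (\<lambda>y. bessel_kernel c x y * uht y t)
      = eps * (uhxx x t + c / 2 * uh x t + c * x / 2 * uhx x t - bessel_kernel_x c x x * uh x t
              - integral {0..x} (\<lambda>y. bessel_kernel_xx c x y * uh y t)) + gfun eps lam q x * wt 0 t"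
      by (intro observer_interior_transformed[OF ep lam c_def sol]) auto
  next
    fix t :: real assume t: "t > 0"
    show "uhx 0 t + c * 0 / 2 * uh 0 t - integral {0..0} (\<lambda>y. bessel_kernel_x c 0 y * uh y t)
      = - (lam / (2 * eps)) * wt 0 t"
      using observer error0 t by simp
    have "continuous_on {0..1} (\<lambda>y. uh y t)"
      using sol continuous_on_section[of "{0..1}" "{0<..}" uh t] t unfolding classical_sol_def by blast
    with observer control t
    show "uhx 1 t + c * 1 / 2 * uh 1 t - integral {0..1} (\<lambda>y. bessel_kernel_x c 1 y * uh y t)
      = - (q - lam / (2 * eps)) * (uh 1 t - integral {0..1} (\<lambda>y. kerK eps lam 1 y * uh y t))"
      by (intro observer_boundary_1_transformed[OF ep lam c_def]) auto
  qed
qed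

theorem proposition2:
  fixes eps lam q :: real
  assumes "eps > 0" and "lam > 0"
  shows
   "(\<forall>x y. 0 < y \<and> y < x \<and> x < 1 \<longrightarrow>
       (\<lambda>s. kerK eps lam s y) differentiable (at x) \<and>
       (\<lambda>s. deriv (\<lambda>s'. kerK eps lam s' y) s) differentiable (at x) \<and>
       (\<lambda>s. kerK eps lam x s) differentiable (at y) \<and>
       (\<lambda>s. deriv (\<lambda>s'. kerK eps lam x s') s) differentiable (at y) \<and>
       deriv (\<lambda>s. deriv (\<lambda>s'. kerK eps lam s' y) s) x
         - deriv (\<lambda>s. deriv (\<lambda>s'. kerK eps lam x s') s) y
         = lam / eps * kerK eps lam x y)
    \<and> (\<forall>x\<in>{0..1}. (\<lambda>s. kerK eps lam x s) differentiable (at 0) \<and>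
                    deriv (\<lambda>s. kerK eps lam x s) 0 = 0)
    \<and> (\<forall>x\<in>{0..1}. kerK eps lam x x = - (lam / (2 * eps)) * x)
    \<and> (\<forall>u ux uxx ut uh uhx uhxx uht wt (U :: real \<Rightarrow> real).
         let r = q - lam / (2 * eps) in
         classical_sol u ux uxx ut \<and>
         (\<forall>t>0. (\<forall>x\<in>{0<..<1}. ut x t = eps * uxx x t + lam * u x t) \<and>
                ux 0 t = 0 \<and> ux 1 t + q * u 1 t = U t) \<and>
         classical_sol uh uhx uhxx uht \<and>
         (\<forall>t>0. (\<forall>x\<in>{0<..<1}. uht x t = eps * uhxx x t + lam * uh x t
                                       + obs_p1 eps lam q x * (u 0 t - uh 0 t)) \<and>
                uhx 0 t = - (lam / (2 * eps)) * (u 0 t - uh 0 t) \<and>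
                uhx 1 t + q * uh 1 t = U t) \<and>
         (\<forall>t>0. U t = integral {0..1}
                  (\<lambda>y. (r * kerK eps lam 1 y + deriv (\<lambda>s. kerK eps lam s y) 1) * uh y t)) \<and>
         (\<forall>t>0. \<forall>x\<in>{0..1}. u x t - uh x t
                  = wt x t - integral {0..x} (\<lambda>y. kerP eps lam q x y * wt y t))
         \<longrightarrow>
         (let wh = (\<lambda>x t. uh x t - integral {0..x} (\<lambda>y. kerK eps lam x y * uh y t)) in
          \<exists>whx whxx wht. classical_sol wh whx whxx wht \<and>
            (\<forall>t>0. (\<forall>x\<in>{0<..<1}. wht x t = eps * whxx x t + gfun eps lam q x * wt 0 t) \<and>
                   whx 0 t = - (lam / (2 * eps)) * wt 0 t \<and>
                   whx 1 t = - r * wh 1 t)))"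
proof -
  have lam: "lam \<ge> 0"
    using assms(2) by simp
  show ?thesis (is "?kernel_pde \<and> ?neumann \<and> ?diagonal \<and> ?transformation")
  proof (intro conjI)
    show ?kernel_pde
      using kerK_pde[OF assms(1) lam] by blast
    show ?neumann
      using kerK_neumann_at_0[OF assms(1) lam] by auto
    show ?diagonal
      using kerK_diagonal by blast
    show ?transformation
      unfolding Let_def
      by (intro allI impI, elim conjE, rule observer_target_system[OF assms(1) lam]; assumption)
  qed
qed

end
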